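(* Let $SC_3(x)=\sum_{n\ge0} sc_3(\mathcal{D}_n)x^n$, where $sc_3(\mathcal{D}_n)$ is the number of saturated chains of length 3 in the Dyck lattice $\mathcal{D}_n$. Then $$ SC_3(x)=\sum_{n\ge0}\sum_{\gamma\in\mathcal{D}_n}\big(6\,\#(du,du,du)_\gamma+3\,\#(du,ddu)_\gamma+3\,\#(du,duu)_\gamma+\#(dddu)_\gamma+\#(duuu)_\gamma+2\,\#(dduu)_\gamma+2\,\#(dudu)_\gamma\big)x^n . $$
   Context: A Dyck path of semilength $n$ is a lattice path from $(0,0)$ to $(2n,0)$ with steps $u=(1,1)$ and $d=(1,-1)$ never going below the $x$-axis, identified with a word over $\{u,d\}$. $\mathcal{D}_n$ is the set of Dyck paths of semilength $n$ ordered by containment: $\gamma\le\gamma'$ iff $\gamma$ lies weakly below $\gamma'$. A saturated chain of length $h$ is a sequence $\gamma^{(0)}<\cdots<\gamma^{(h)}$ in which each element covers the previous one. For words $\gamma_1,\ldots,\gamma_k$, $\#(\gamma_1,\ldots,\gamma_k)_\gamma$ denotes the number of sets of pairwise disjoint (non-overlapping) occurrences of the factors $\gamma_1,\ldots,\gamma_k$ in $\gamma$ (occurrences of equal words being unordered); e.g. $\#(du,du,du)_\gamma$ is the number of 3-element sets of valleys of $\gamma$, $\#(du,ddu)_\gamma$ is the number of pairs consisting of an occurrence of $du$ and a non-overlapping occurrence of $ddu$, and $\#(w)_\gamma$ is the number of occurrences of the factor $w$ in $\gamma$. *)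

theory Defs
  imports Main "HOL-Library.Multiset" "HOL-Computational_Algebra.Formal_Power_Series"
begin

datatype step = U | D

type_synonym path = "step list"

definition height :: "path \<Rightarrow> nat \<Rightarrow> int" where
  "height w i = int (length (filter (\<lambda>s. s = U) (take i w)))
              - int (length (filter (\<lambda>s. s = D) (take i w)))"

definition dyck :: "path \<Rightarrow> bool" where
  "dyck w \<longleftrightarrow> (\<forall>i\<le>length w. 0 \<le> height w i) \<and> height w (length w) = 0"

definition Dyck :: "nat \<Rightarrow> path set" where
  "Dyck n = {w. dyck w \<and> length w = 2 * n}"

definition below :: "path \<Rightarrow> path \<Rightarrow> bool" where
  "below w w' \<longleftrightarrow> length w = length w' \<and> (\<forall>i\<le>length w. height w i \<le> height w' i)"

definition strictly_below :: "path \<Rightarrow> path \<Rightarrow> bool" where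
  "strictly_below w w' \<longleftrightarrow> below w w' \<and> w \<noteq> w'"

definition covers :: "nat \<Rightarrow> path \<Rightarrow> path \<Rightarrow> bool" where
  "covers n a b \<longleftrightarrow> a \<in> Dyck n \<and> b \<in> Dyck n \<and> strictly_below a b \<and>
     \<not> (\<exists>c\<in>Dyck n. strictly_below a c \<and> strictly_below c b)"

definition sc3 :: "nat \<Rightarrow> nat" where
  "sc3 n = card {(a, b, c, d). covers n a b \<and> covers n b c \<and> covers n c d}"

definition occ :: "path \<Rightarrow> path \<Rightarrow> nat set" where
  "occ v w = {i. i + length v \<le> length w \<and> take (length v) (drop i w) = v}"

text \<open>Number of sets of pairwise non-overlapping occurrences of the factors ws
  in w (occurrences of equal words unordered). An occurrence is a pair
  (factor, starting position).\<close>
definition num_occ :: "path list \<Rightarrow> path \<Rightarrow> nat" where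
  "num_occ ws w = card {S :: (path \<times> nat) set.
      finite S \<and> (\<forall>(v, i)\<in>S. i \<in> occ v w) \<and>
      image_mset fst (mset_set S) = mset ws \<and>
      (\<forall>(v, i)\<in>S. \<forall>(v', i')\<in>S. (v, i) \<noteq> (v', i') \<longrightarrow>
          {i..<i + length v} \<inter> {i'..<i' + length v'} = {})}"

end

theory Submission
  imports Defs
begin

text \<open>A cover in the Dyck lattice raises one valley \<open>du\<close> of a path to a peak \<open>ud\<close>, so
  \<open>sc\<^sub>3(D\<^sub>n)\<close> counts the triples of successive valley flips starting in \<open>D\<^sub>n\<close>.
  Flipping the valley at position \<open>i\<close> destroys it and creates a new valley at \<open>i - 1\<close> if it is
  preceded by \<open>d\<close> and at \<open>i + 1\<close> if it is followed by \<open>u\<close>. Tracking these local changes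
  through two flips expresses the number of flip triples from \<open>\<gamma>\<close> as a polynomial in the
  numbers of factors \<open>du, ddu, duu, dddu, duuu, dduu, dudu\<close> of \<open>\<gamma>\<close>; counting disjoint pairs
  and triples of occurrences turns this polynomial into the stated combination.\<close>

lemma height_0 [simp]: "height w 0 = 0"
  by (simp add: height_def)

lemma height_Suc:
  "i < length w \<Longrightarrow> height w (Suc i) = height w i + (if w ! i = U then 1 else -1)"
  by (cases "w ! i") (simp_all add: height_def take_Suc_conv_app_nth)

lemma height_eq_parity:
  "i \<le> length w \<Longrightarrow> height w i = 2 * int (length (filter (\<lambda>s. s = U) (take i w))) - int i"
proof (induction i)
  case (Suc i)
  then show ?case by (cases "w ! i") (auto simp: height_Suc take_Suc_conv_app_nth)
qed simp

lemma height_less_imp_add_two_le: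
  "length a = length b \<Longrightarrow> k \<le> length a \<Longrightarrow> height a k < height b k \<Longrightarrow> height a k + 2 \<le> height b k"
  using height_eq_parity[of k a] height_eq_parity[of k b] by simp

lemma eq_if_heights_eq:
  assumes "length w = length w'" and "\<forall>i\<le>length w. height w i = height w' i"
  shows "w = w'"
proof (rule nth_equalityI)
  fix i assume i: "i < length w"
  have "height w (Suc i) = height w' (Suc i)" "height w i = height w' i" using assms(2) i by auto
  then show "w ! i = w' ! i" using height_Suc[of i w] height_Suc[of i w'] i assms(1)
    by (cases "w ! i"; cases "w' ! i") auto
qed (use assms in simp)

lemma mem_occ_Nil: "i \<in> occ [] w \<longleftrightarrow> i \<le> length w"
  by (simp add: occ_def)

lemma mem_occ_Cons: "i \<in> occ (x # v) w \<longleftrightarrow> i < length w \<and> w ! i = x \<and> Suc i \<in> occ v w"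
proof (cases "i < length w")
  case True
  then show ?thesis by (auto simp: occ_def Cons_nth_drop_Suc[symmetric])
qed (auto simp: occ_def)

lemma finite_occ: "finite (occ v w)"
  by (rule finite_subset[of _ "{..length w}"]) (auto simp: occ_def)

definition valleys :: "path \<Rightarrow> nat set" where
  "valleys w = occ [D, U] w"

lemma mem_valleys: "i \<in> valleys w \<longleftrightarrow> Suc i < length w \<and> w ! i = D \<and> w ! Suc i = U"
  by (auto simp: valleys_def mem_occ_Cons mem_occ_Nil)

lemma finite_valleys: "finite (valleys w)"
  by (simp add: valleys_def finite_occ)

definition flip_valley :: "path \<Rightarrow> nat \<Rightarrow> path" where
  "flip_valley w i = w[i := U, Suc i := D]"

lemma length_flip_valley [simp]: "length (flip_valley w i) = length w"
  by (simp add: flip_valley_def)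

lemma nth_flip_valley:
  "k < length w \<Longrightarrow> Suc i < length w \<Longrightarrow>
    flip_valley w i ! k = (if k = Suc i then D else if k = i then U else w ! k)"
  by (simp add: flip_valley_def nth_list_update)

lemma height_flip_valley:
  assumes "i \<in> valleys w" and "k \<le> length w"
  shows "height (flip_valley w i) k = height w k + (if k = Suc i then 2 else 0)"
  using assms(2)
proof (induction k)
  case (Suc k)
  then show ?case using assms(1) by (auto simp: height_Suc nth_flip_valley mem_valleys)
qed simp

lemma flip_valley_neq: "i \<in> valleys w \<Longrightarrow> flip_valley w i \<noteq> w"
  using height_flip_valley[of i w "Suc i"] by (auto simp: mem_valleys)

lemma below_flip_valley: "i \<in> valleys w \<Longrightarrow> below w (flip_valley w i)"
  by (auto simp: below_def height_flip_valley)

lemma flip_valley_in_Dyck: "w \<in> Dyck n \<Longrightarrow> i \<in> valleys w \<Longrightarrow> flip_valley w i \<in> Dyck n"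
  by (auto simp: Dyck_def dyck_def height_flip_valley mem_valleys)

lemma flip_valley_inj:
  assumes "i \<in> valleys w" "j \<in> valleys w" "flip_valley w i = flip_valley w j"
  shows "i = j"
proof (rule ccontr)
  assume "i \<noteq> j"
  then have "flip_valley w j ! i = D" using assms(1,2) by (auto simp: mem_valleys nth_flip_valley)
  moreover have "flip_valley w i ! i = U" using assms(1) by (simp add: mem_valleys nth_flip_valley)
  ultimately show False using assms(3) by simp
qed

lemma between_flip_valley:
  assumes "i \<in> valleys a" "below a c" "below c (flip_valley a i)"
  shows "c = a \<or> c = flip_valley a i"
proof -
  have v: "Suc i < length a" "a ! i = D" "a ! Suc i = U" using assms(1) by (auto simp: mem_valleys)
  have l: "length c = length a" using assms(2) by (simp add: below_def)
  have eq: "height c k = height a k" if "k \<le> length a" "k \<noteq> Suc i" for k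
    using assms that l by (force simp: below_def height_flip_valley)
  have "height c (Suc i) = height a (Suc i) + 2 \<or> height c (Suc i) = height a (Suc i)"
    using height_Suc[of i c] height_Suc[of i a] v l eq[of i] by auto
  then show ?thesis
  proof
    assume "height c (Suc i) = height a (Suc i) + 2"
    then have "c = flip_valley a i"
      using eq l by (intro eq_if_heights_eq) (auto simp: height_flip_valley[OF assms(1)])
    then show ?thesis ..
  next
    assume "height c (Suc i) = height a (Suc i)"
    then have "c = a" using eq l by (intro eq_if_heights_eq) auto
    then show ?thesis ..
  qed
qed

text \<open>The valley raised is the one whose bottom is the lowest point at which \<open>a\<close> lies
  strictly below \<open>b\<close>; heights of paths of equal length differ by an even number, so the
  raised path stays below \<open>b\<close>.\<close>
lemma exists_flip_valley_below:
  assumes "a \<in> Dyck n" "b \<in> Dyck n" "strictly_below a b"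
  shows "\<exists>i\<in>valleys a. below (flip_valley a i) b"
proof -
  have l: "length a = length b" and le: "\<forall>k\<le>length a. height a k \<le> height b k"
    using assms(3) by (auto simp: strictly_below_def below_def)
  have "\<exists>k\<le>length a. height a k < height b k"
  proof (rule ccontr)
    assume "\<not> ?thesis"
    then have "a = b" using le by (intro eq_if_heights_eq[OF l]) force
    then show False using assms(3) by (simp add: strictly_below_def)
  qed
  then obtain k0 where "k0 \<le> length a \<and> height a k0 < height b k0" by blast
  from ex_has_least_nat[where P = "\<lambda>k. k \<le> length a \<and> height a k < height b k"
      and m = "\<lambda>k. nat (height a k)", OF this]
  obtain k where k: "k \<le> length a" "height a k < height b k"
    and min: "\<And>k'. k' \<le> length a \<Longrightarrow> height a k' < height b k' \<Longrightarrow>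
                      nat (height a k) \<le> nat (height a k')"
    by blast
  have pos: "\<And>k. k \<le> length a \<Longrightarrow> 0 \<le> height a k"
    using assms(1) by (simp add: Dyck_def dyck_def)
  have "k \<noteq> 0" using k by (cases k) auto
  moreover have "k \<noteq> length a" using k assms(1,2) l by (auto simp: Dyck_def dyck_def)
  ultimately
  obtain j where j: "k = Suc j" "Suc j < length a" using k(1) by (cases k) auto
  have "a ! j = D"
  proof (rule ccontr)
    assume "a ! j \<noteq> D"
    then have "height a j = height a k - 1" using height_Suc[of j a] j by (cases "a ! j") auto
    moreover have "height b k \<le> height b j + 1" using height_Suc[of j b] j l by auto
    ultimately show False using min[of j] k pos[of j] j by simp
  qed
  moreover have "a ! k = U"
  proof (rule ccontr)
    assume "a ! k \<noteq> U"
    then have "height a (Suc k) = height a k - 1" using height_Suc[of k a] j by (cases "a ! k") auto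
    moreover have "height b k \<le> height b (Suc k) + 1" using height_Suc[of k b] j l by auto
    ultimately show False using min[of "Suc k"] k pos[of "Suc k"] j by simp
  qed
  ultimately have jV: "j \<in> valleys a" using j by (simp add: mem_valleys)
  have "below (flip_valley a j) b"
    using l le height_less_imp_add_two_le[OF l k] j by (auto simp: below_def height_flip_valley[OF jV])
  then show ?thesis using jV by blast
qed

lemma covers_iff_flip_valley:
  "covers n a b \<longleftrightarrow> a \<in> Dyck n \<and> (\<exists>i\<in>valleys a. b = flip_valley a i)"
proof
  assume c: "covers n a b"
  then have a: "a \<in> Dyck n" "b \<in> Dyck n" "strictly_below a b" by (auto simp: covers_def)
  obtain i where i: "i \<in> valleys a" "below (flip_valley a i) b"
    using exists_flip_valley_below[OF a] by blast
  have "strictly_below a (flip_valley a i)"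
    using i flip_valley_neq below_flip_valley by (metis strictly_below_def)
  then have "b = flip_valley a i"
    using c i flip_valley_in_Dyck[OF a(1) i(1)] by (auto simp: covers_def strictly_below_def)
  then show "a \<in> Dyck n \<and> (\<exists>i\<in>valleys a. b = flip_valley a i)" using a i by blast
next
  assume "a \<in> Dyck n \<and> (\<exists>i\<in>valleys a. b = flip_valley a i)"
  then obtain i where a: "a \<in> Dyck n" "i \<in> valleys a" "b = flip_valley a i" by blast
  then show "covers n a b"
    using between_flip_valley[OF a(2)] flip_valley_in_Dyck[OF a(1,2)] below_flip_valley[OF a(2)]
      flip_valley_neq[OF a(2)]
    by (auto simp: covers_def strictly_below_def)
qed

lemma finite_Dyck: "finite (Dyck n)"
proof -
  have "Dyck n \<subseteq> {xs. set xs \<subseteq> UNIV \<and> length xs = 2 * n}" by (auto simp: Dyck_def)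
  moreover have "finite (UNIV :: step set)"
    by (rule finite_subset[of _ "{U, D}"]) (auto intro: step.exhaust)
  ultimately show ?thesis by (rule finite_subset[OF _ finite_lists_length_eq])
qed

lemma sc3_eq_sum_valleys:
  "sc3 n = (\<Sum>a\<in>Dyck n. \<Sum>i\<in>valleys a. \<Sum>j\<in>valleys (flip_valley a i).
              card (valleys (flip_valley (flip_valley a i) j)))"
proof -
  define T where "T = (SIGMA a:Dyck n. SIGMA i:valleys a. SIGMA j:valleys (flip_valley a i).
                        valleys (flip_valley (flip_valley a i) j))"
  define chain where "chain = (\<lambda>(a, i, j, k). (a, flip_valley a i, flip_valley (flip_valley a i) j,
                                flip_valley (flip_valley (flip_valley a i) j) k))"
  have "{(a, b, c, d). covers n a b \<and> covers n b c \<and> covers n c d} = chain ` T"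
  proof (intro set_eqI iffI)
    fix x assume "x \<in> {(a, b, c, d). covers n a b \<and> covers n b c \<and> covers n c d}"
    then obtain a i j k where "a \<in> Dyck n" "i \<in> valleys a" "j \<in> valleys (flip_valley a i)"
      "k \<in> valleys (flip_valley (flip_valley a i) j)"
      "x = chain (a, i, j, k)"
      by (auto simp: covers_iff_flip_valley chain_def)
    then show "x \<in> chain ` T" by (auto simp: T_def)
  next
    fix x assume "x \<in> chain ` T"
    then show "x \<in> {(a, b, c, d). covers n a b \<and> covers n b c \<and> covers n c d}"
      by (auto simp: T_def chain_def covers_iff_flip_valley intro!: flip_valley_in_Dyck)
  qed
  moreover have "inj_on chain T"
    by (rule inj_onI) (auto simp: T_def chain_def dest: flip_valley_inj)
  ultimately have "sc3 n = card T" by (simp add: sc3_def card_image)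
  then show ?thesis by (simp add: T_def finite_Dyck finite_valleys)
qed

definition disjoint_occurrences :: "path list \<Rightarrow> path \<Rightarrow> (path \<times> nat) set set" where
  "disjoint_occurrences ws w = {S. finite S \<and> (\<forall>(v, i)\<in>S. i \<in> occ v w) \<and>
      image_mset fst (mset_set S) = mset ws \<and>
      (\<forall>(v, i)\<in>S. \<forall>(v', i')\<in>S. (v, i) \<noteq> (v', i') \<longrightarrow>
          {i..<i + length v} \<inter> {i'..<i' + length v'} = {})}"

lemma num_occ_eq_card: "num_occ ws w = card (disjoint_occurrences ws w)"
  by (simp add: num_occ_def disjoint_occurrences_def)

lemma image_mset_fst_mset_set_eqD:
  assumes "finite S" "image_mset fst (mset_set S) = M"
  shows "card S = size M" "fst ` S = set_mset M"
  using arg_cong[OF assms(2), of size] arg_cong[OF assms(2), of set_mset] assms(1) by simp_all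

lemma num_occ_single: "num_occ [v] w = card (occ v w)"
proof -
  have "disjoint_occurrences [v] w = (\<lambda>i. {(v, i)}) ` occ v w"
  proof (intro set_eqI iffI)
    fix S assume S: "S \<in> disjoint_occurrences [v] w"
    then have "card S = 1" "fst ` S = {v}"
      using image_mset_fst_mset_set_eqD[of S] by (auto simp: disjoint_occurrences_def)
    then obtain i where "S = {(v, i)}" by (auto simp: card_1_singleton_iff)
    then show "S \<in> (\<lambda>i. {(v, i)}) ` occ v w" using S by (auto simp: disjoint_occurrences_def)
  qed (auto simp: disjoint_occurrences_def)
  moreover have "inj_on (\<lambda>i. {(v, i)}) (occ v w)" by (rule inj_onI) auto
  ultimately show ?thesis by (simp add: num_occ_eq_card card_image)
qed

lemma num_occ_replicate:
  assumes "\<forall>i\<in>occ v w. \<forall>j\<in>occ v w. i \<noteq> j \<longrightarrow> {i..<i + length v} \<inter> {j..<j + length v} = {}"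
  shows "num_occ (replicate k v) w = card (occ v w) choose k"
proof -
  have "disjoint_occurrences (replicate k v) w = (\<lambda>I. Pair v ` I) ` {I. I \<subseteq> occ v w \<and> card I = k}"
  proof (intro set_eqI iffI)
    fix S assume S: "S \<in> disjoint_occurrences (replicate k v) w"
    then have card: "card S = k" and fst: "fst ` S \<subseteq> {v}"
      using image_mset_fst_mset_set_eqD[of S] by (auto simp: disjoint_occurrences_def)
    then have S_eq: "S = Pair v ` snd ` S"
      by (force simp: image_iff)
    then have "card (snd ` S) = k"
      using card by (metis card_image inj_on_def prod.inject)
    moreover have "snd ` S \<subseteq> occ v w"
      using S S_eq by (auto simp: disjoint_occurrences_def)
    ultimately show "S \<in> (\<lambda>I. Pair v ` I) ` {I. I \<subseteq> occ v w \<and> card I = k}"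
      using S_eq by blast
  next
    fix S assume "S \<in> (\<lambda>I. Pair v ` I) ` {I. I \<subseteq> occ v w \<and> card I = k}"
    then obtain I where I: "S = Pair v ` I" "I \<subseteq> occ v w" "card I = k" by blast
    have "finite I" using I(2) finite_occ finite_subset by blast
    moreover have "inj_on (Pair v) I" by (rule inj_onI) auto
    ultimately have "image_mset fst (mset_set S) = mset (replicate k v)"
      using I by (simp add: image_mset_mset_set[symmetric] multiset.map_comp comp_def image_mset_const_eq)
    moreover have "\<forall>(u, i)\<in>S. \<forall>(u', i')\<in>S. (u, i) \<noteq> (u', i') \<longrightarrow>
        {i..<i + length u} \<inter> {i'..<i' + length u'} = {}"
      using I(1,2) assms by blast
    ultimately show "S \<in> disjoint_occurrences (replicate k v) w"
      using I \<open>finite I\<close> by (auto simp: disjoint_occurrences_def)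
  qed
  moreover have "inj_on (\<lambda>I. Pair v ` I) {I. I \<subseteq> occ v w \<and> card I = k}"
    by (simp add: inj_on_def inj_image_eq_iff)
  ultimately show ?thesis by (simp add: num_occ_eq_card card_image n_subsets finite_occ)
qed

lemma num_occ_pair:
  assumes "v \<noteq> v'"
  shows "num_occ [v, v'] w = card {(i, j). i \<in> occ v w \<and> j \<in> occ v' w \<and>
           {i..<i + length v} \<inter> {j..<j + length v'} = {}}" (is "_ = card ?P")
proof -
  let ?f = "\<lambda>(i, j). {(v, i), (v', j)}"
  have "disjoint_occurrences [v, v'] w = ?f ` ?P"
  proof (intro set_eqI iffI)
    fix S assume S: "S \<in> disjoint_occurrences [v, v'] w"
    then have "card S = 2" "fst ` S = {v, v'}"
      using image_mset_fst_mset_set_eqD[of S] by (auto simp: disjoint_occurrences_def)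
    then obtain i j where S_eq: "S = {(v, i), (v', j)}"
      by (auto simp: card_2_iff doubleton_eq_iff) (metis prod.collapse)+
    have "(i, j) \<in> ?P"
      using S assms unfolding S_eq disjoint_occurrences_def by auto
    then show "S \<in> ?f ` ?P" unfolding S_eq by (rule rev_image_eqI) simp
  next
    fix S assume "S \<in> ?f ` ?P"
    then obtain p where "S = ?f p" "p \<in> ?P" by blast
    then show "S \<in> disjoint_occurrences [v, v'] w"
      using assms by (cases p) (auto simp: disjoint_occurrences_def Int_commute)
  qed
  moreover have "inj_on ?f ?P"
    using assms by (auto simp: inj_on_def doubleton_eq_iff)
  ultimately show ?thesis by (simp add: num_occ_eq_card card_image)
qed

lemma disjoint_atLeastLessThan_add_iff:
  "{i..<i + m} \<inter> {j..<j + (n::nat)} = {} \<longleftrightarrow> m = 0 \<or> n = 0 \<or> i + m \<le> j \<or> j + n \<le> i"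
proof
  assume "{i..<i + m} \<inter> {j..<j + n} = {}"
  then have "max i j \<notin> {i..<i + m} \<inter> {j..<j + n}" by blast
  then show "m = 0 \<or> n = 0 \<or> i + m \<le> j \<or> j + n \<le> i" by auto
qed auto

lemma card_times_diff_graph:
  assumes "finite A" "finite B" "g ` B \<subseteq> A"
  shows "int (card (A \<times> B - (\<lambda>j. (g j, j)) ` B)) = int (card A) * int (card B) - int (card B)"
proof -
  have sub: "(\<lambda>j. (g j, j)) ` B \<subseteq> A \<times> B" using assms(3) by auto
  have card_graph: "card ((\<lambda>j. (g j, j)) ` B) = card B" by (rule card_image) (auto simp: inj_on_def)
  have "card B \<le> card A * card B"
    using card_mono[OF _ sub] assms(1,2) card_graph by (simp add: card_cartesian_product)
  then show ?thesis
    using card_Diff_subset[OF finite_subset[OF sub] sub] assms(1,2) card_graph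
    by (simp add: card_cartesian_product of_nat_diff)
qed

lemma num_occ_three_valleys: "num_occ [[D, U], [D, U], [D, U]] w = card (valleys w) choose 3"
proof -
  have "{i..<i + length [D, U]} \<inter> {j..<j + length [D, U]} = {}"
    if "i \<in> valleys w" "j \<in> valleys w" "i \<noteq> j" for i j
  proof -
    have "i \<noteq> Suc j" "j \<noteq> Suc i" using that by (auto simp: mem_valleys)
    then show ?thesis using that(3) unfolding disjoint_atLeastLessThan_add_iff by auto
  qed
  then have "num_occ (replicate 3 [D, U]) w = card (valleys w) choose 3"
    by (intro num_occ_replicate[of "[D, U]" w 3, folded valleys_def]) blast
  then show ?thesis by (simp add: numeral_3_eq_3)
qed

lemma num_occ_valley_DDU:
  "int (num_occ [[D, U], [D, D, U]] w)
     = int (card (valleys w)) * int (card (occ [D, D, U] w)) - int (card (occ [D, D, U] w))"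
proof -
  have overlap: "{i..<i + length [D, U]} \<inter> {j..<j + length [D, D, U]} = {} \<longleftrightarrow> i \<noteq> Suc j"
    if "i \<in> valleys w" "j \<in> occ [D, D, U] w" for i j
  proof -
    have "i \<noteq> j" "Suc i \<noteq> j" "i \<noteq> Suc (Suc j)"
      using that by (auto simp: mem_valleys mem_occ_Cons)
    then show ?thesis unfolding disjoint_atLeastLessThan_add_iff by auto
  qed
  have "Suc ` occ [D, D, U] w \<subseteq> valleys w" by (auto simp: mem_valleys mem_occ_Cons)
  moreover have "{(i, j). i \<in> occ [D, U] w \<and> j \<in> occ [D, D, U] w \<and>
      {i..<i + length [D, U]} \<inter> {j..<j + length [D, D, U]} = {}}
    = valleys w \<times> occ [D, D, U] w - (\<lambda>j. (Suc j, j)) ` occ [D, D, U] w"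
    using overlap by (auto simp: valleys_def[symmetric])
  ultimately show ?thesis
    using num_occ_pair[of "[D, U]" "[D, D, U]" w] card_times_diff_graph[of _ _ Suc]
    by (simp add: finite_occ finite_valleys)
qed

lemma num_occ_valley_DUU:
  "int (num_occ [[D, U], [D, U, U]] w)
     = int (card (valleys w)) * int (card (occ [D, U, U] w)) - int (card (occ [D, U, U] w))"
proof -
  have overlap: "{i..<i + length [D, U]} \<inter> {j..<j + length [D, U, U]} = {} \<longleftrightarrow> i \<noteq> j"
    if "i \<in> valleys w" "j \<in> occ [D, U, U] w" for i j
  proof -
    have "i \<noteq> Suc j" "Suc i \<noteq> j" "i \<noteq> Suc (Suc j)"
      using that by (auto simp: mem_valleys mem_occ_Cons)
    then show ?thesis unfolding disjoint_atLeastLessThan_add_iff by auto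
  qed
  have "occ [D, U, U] w \<subseteq> valleys w" by (auto simp: mem_valleys mem_occ_Cons)
  moreover have "{(i, j). i \<in> occ [D, U] w \<and> j \<in> occ [D, U, U] w \<and>
      {i..<i + length [D, U]} \<inter> {j..<j + length [D, U, U]} = {}}
    = valleys w \<times> occ [D, U, U] w - (\<lambda>j. (j, j)) ` occ [D, U, U] w"
    using overlap by (auto simp: valleys_def[symmetric])
  ultimately show ?thesis
    using num_occ_pair[of "[D, U]" "[D, U, U]" w]
      card_times_diff_graph[of "valleys w" "occ [D, U, U] w" "\<lambda>j. j"]
    by (simp add: finite_occ finite_valleys)
qed

lemma card_Diff_singleton_Un_ifs:
  assumes "finite A" "P \<Longrightarrow> y \<notin> A" "Q \<Longrightarrow> z \<notin> A" "y \<noteq> z"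
  shows "int (card (A - {x} \<union> (if P then {y} else {}) \<union> (if Q then {z} else {})))
           = int (card A) - of_bool (x \<in> A) + of_bool P + of_bool Q"
proof -
  have "x \<in> A \<Longrightarrow> Suc 0 \<le> card A" using assms(1) by (auto simp: Suc_le_eq card_gt_0_iff)
  then show ?thesis
    using assms by (cases P; cases Q) (auto simp: card_insert_if card_Diff_singleton_if of_nat_diff)
qed

lemma near_index_cases:
  fixes i j :: nat
  obtains "Suc (Suc j) < i" | "Suc (Suc j) = i" | "Suc j = i" | "j = i" | "j = Suc i" | "Suc i < j"
  by linarith

lemma valleys_flip_valley:
  assumes "i \<in> valleys w"
  shows "valleys (flip_valley w i) = valleys w - {i}
     \<union> (if 0 < i \<and> w ! (i - 1) = D then {i - 1} else {})
     \<union> (if Suc (Suc i) < length w \<and> w ! Suc (Suc i) = U then {Suc i} else {})" (is "?L = ?R")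
proof (rule set_eqI)
  show "j \<in> ?L \<longleftrightarrow> j \<in> ?R" for j
    using assms by (cases i j rule: near_index_cases) (auto simp: mem_valleys nth_flip_valley)
qed

text \<open>For \<open>i = 0\<close> the removed position \<open>i - 1 = 0\<close> is harmless: it is no \<open>ddu\<close>
  position, as \<open>w ! 1 = U\<close>.\<close>
lemma occ_DDU_flip_valley:
  assumes "i \<in> valleys w"
  shows "occ [D, D, U] (flip_valley w i) = occ [D, D, U] w - {i - 1}
     \<union> (if 2 \<le> i \<and> w ! (i - 2) = D \<and> w ! (i - 1) = D then {i - 2} else {})
     \<union> (if Suc (Suc (Suc i)) < length w \<and> w ! Suc (Suc i) = D \<and> w ! Suc (Suc (Suc i)) = U
        then {Suc i} else {})" (is "?L = ?R")
proof (rule set_eqI)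
  show "j \<in> ?L \<longleftrightarrow> j \<in> ?R" for j
    using assms by (cases i j rule: near_index_cases)
      (auto simp: mem_valleys mem_occ_Cons mem_occ_Nil nth_flip_valley)
qed

lemma occ_DUU_flip_valley:
  assumes "i \<in> valleys w"
  shows "occ [D, U, U] (flip_valley w i) = occ [D, U, U] w - {i}
     \<union> (if 2 \<le> i \<and> w ! (i - 2) = D \<and> w ! (i - 1) = U then {i - 2} else {})
     \<union> (if Suc (Suc (Suc i)) < length w \<and> w ! Suc (Suc i) = U \<and> w ! Suc (Suc (Suc i)) = U
        then {Suc i} else {})" (is "?L = ?R")
proof (rule set_eqI)
  show "j \<in> ?L \<longleftrightarrow> j \<in> ?R" for j
    using assms by (cases i j rule: near_index_cases)
      (auto simp: mem_valleys mem_occ_Cons mem_occ_Nil nth_flip_valley)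
qed

lemma card_valleys_flip_valley:
  assumes "i \<in> valleys w"
  shows "int (card (valleys (flip_valley w i))) = int (card (valleys w)) - 1
     + of_bool (0 < i \<and> w ! (i - 1) = D) + of_bool (Suc (Suc i) < length w \<and> w ! Suc (Suc i) = U)"
  unfolding valleys_flip_valley[OF assms] using assms
  by (subst card_Diff_singleton_Un_ifs) (auto simp: finite_valleys mem_valleys)

lemma card_occ_DDU_flip_valley:
  assumes "i \<in> valleys w"
  shows "int (card (occ [D, D, U] (flip_valley w i))) = int (card (occ [D, D, U] w))
     - of_bool (0 < i \<and> w ! (i - 1) = D) + of_bool (2 \<le> i \<and> w ! (i - 2) = D \<and> w ! (i - 1) = D)
     + of_bool (Suc (Suc (Suc i)) < length w \<and> w ! Suc (Suc i) = D \<and> w ! Suc (Suc (Suc i)) = U)"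
proof -
  have "i - 1 \<in> occ [D, D, U] w \<longleftrightarrow> 0 < i \<and> w ! (i - 1) = D"
    using assms by (cases i) (auto simp: mem_valleys mem_occ_Cons mem_occ_Nil)
  moreover have "i - 2 \<notin> occ [D, D, U] w" if "2 \<le> i"
    using assms that by (auto simp: mem_valleys mem_occ_Cons numeral_2_eq_2 Suc_diff_Suc)
  ultimately show ?thesis
    unfolding occ_DDU_flip_valley[OF assms] using assms
    by (subst card_Diff_singleton_Un_ifs) (auto simp: finite_occ mem_valleys mem_occ_Cons)
qed

lemma card_occ_DUU_flip_valley:
  assumes "i \<in> valleys w"
  shows "int (card (occ [D, U, U] (flip_valley w i))) = int (card (occ [D, U, U] w))
     - of_bool (Suc (Suc i) < length w \<and> w ! Suc (Suc i) = U)
     + of_bool (2 \<le> i \<and> w ! (i - 2) = D \<and> w ! (i - 1) = U)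
     + of_bool (Suc (Suc (Suc i)) < length w \<and> w ! Suc (Suc i) = U \<and> w ! Suc (Suc (Suc i)) = U)"
proof -
  have "i \<in> occ [D, U, U] w \<longleftrightarrow> Suc (Suc i) < length w \<and> w ! Suc (Suc i) = U"
    using assms by (auto simp: mem_valleys mem_occ_Cons mem_occ_Nil)
  moreover have "i - 2 \<notin> occ [D, U, U] w" if "2 \<le> i"
    using assms that by (auto simp: mem_valleys mem_occ_Cons numeral_2_eq_2 Suc_diff_Suc)
  ultimately show ?thesis
    unfolding occ_DUU_flip_valley[OF assms] using assms
    by (subst card_Diff_singleton_Un_ifs) (auto simp: finite_occ mem_valleys mem_occ_Cons)
qed

lemma sum_of_bool_eq_card_shift:
  fixes A B :: "nat set"
  assumes "finite A"
    and "\<And>x. x \<in> A \<Longrightarrow> P x \<Longrightarrow> k \<le> x \<and> x - k \<in> B"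
    and "\<And>y. y \<in> B \<Longrightarrow> y + k \<in> A \<and> P (y + k)"
  shows "(\<Sum>x\<in>A. of_bool (P x)) = (of_nat (card B) :: 'a::semiring_1)"
proof -
  have "A \<inter> {x. P x} = (\<lambda>y. y + k) ` B"
  proof (intro set_eqI iffI)
    fix x assume "x \<in> A \<inter> {x. P x}"
    with assms(2) show "x \<in> (\<lambda>y. y + k) ` B" by (auto intro: rev_image_eqI[of "x - k"])
  qed (use assms(3) in auto)
  then have "card (A \<inter> {x. P x}) = card B" by (simp add: card_image)
  then show ?thesis using assms(1) by simp
qed

lemma sum_valleys_D_before:
  "(\<Sum>i\<in>valleys w. of_bool (0 < i \<and> w ! (i - 1) = D)) = int (card (occ [D, D, U] w))"
  by (rule sum_of_bool_eq_card_shift[where k = 1])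
    (auto simp: finite_valleys mem_valleys mem_occ_Cons mem_occ_Nil)

lemma sum_valleys_U_after:
  "(\<Sum>i\<in>valleys w. of_bool (Suc (Suc i) < length w \<and> w ! Suc (Suc i) = U))
     = int (card (occ [D, U, U] w))"
  by (rule sum_of_bool_eq_card_shift[where k = 0])
    (auto simp: finite_valleys mem_valleys mem_occ_Cons mem_occ_Nil)

lemma sum_valleys_D_before_U_after:
  "(\<Sum>i\<in>valleys w. of_bool ((0 < i \<and> w ! (i - 1) = D) \<and>
                                 (Suc (Suc i) < length w \<and> w ! Suc (Suc i) = U)))
     = int (card (occ [D, D, U, U] w))"
  by (rule sum_of_bool_eq_card_shift[where k = 1])
    (auto simp: finite_valleys mem_valleys mem_occ_Cons mem_occ_Nil)

lemma sum_valleys_DD_before: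
  "(\<Sum>i\<in>valleys w. of_bool (2 \<le> i \<and> w ! (i - 2) = D \<and> w ! (i - 1) = D))
     = int (card (occ [D, D, D, U] w))"
  by (rule sum_of_bool_eq_card_shift[where k = 2])
    (auto simp: finite_valleys mem_valleys mem_occ_Cons mem_occ_Nil numeral_2_eq_2 Suc_diff_Suc)

lemma sum_valleys_DU_before:
  "(\<Sum>i\<in>valleys w. of_bool (2 \<le> i \<and> w ! (i - 2) = D \<and> w ! (i - 1) = U))
     = int (card (occ [D, U, D, U] w))"
  by (rule sum_of_bool_eq_card_shift[where k = 2])
    (auto simp: finite_valleys mem_valleys mem_occ_Cons mem_occ_Nil numeral_2_eq_2 Suc_diff_Suc)

lemma sum_valleys_DU_after:
  "(\<Sum>i\<in>valleys w. of_bool (Suc (Suc (Suc i)) < length w \<and> w ! Suc (Suc i) = D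
                                 \<and> w ! Suc (Suc (Suc i)) = U))
     = int (card (occ [D, U, D, U] w))"
  by (rule sum_of_bool_eq_card_shift[where k = 0])
    (auto simp: finite_valleys mem_valleys mem_occ_Cons mem_occ_Nil)

lemma sum_valleys_UU_after:
  "(\<Sum>i\<in>valleys w. of_bool (Suc (Suc (Suc i)) < length w \<and> w ! Suc (Suc i) = U
                                 \<and> w ! Suc (Suc (Suc i)) = U))
     = int (card (occ [D, U, U, U] w))"
  by (rule sum_of_bool_eq_card_shift[where k = 0])
    (auto simp: finite_valleys mem_valleys mem_occ_Cons mem_occ_Nil)

lemma sum_card_valleys_flip_valley:
  "int (\<Sum>j\<in>valleys u. card (valleys (flip_valley u j)))
     = int (card (valleys u)) * (int (card (valleys u)) - 1)
       + int (card (occ [D, D, U] u)) + int (card (occ [D, U, U] u))"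
proof -
  have "int (\<Sum>j\<in>valleys u. card (valleys (flip_valley u j)))
      = (\<Sum>j\<in>valleys u. int (card (valleys u)) - 1 + of_bool (0 < j \<and> u ! (j - 1) = D)
           + of_bool (Suc (Suc j) < length u \<and> u ! Suc (Suc j) = U))"
    unfolding of_nat_sum by (rule sum.cong[OF refl card_valleys_flip_valley])
  also have "\<dots> = (\<Sum>j\<in>valleys u. int (card (valleys u)) - 1)
      + (\<Sum>j\<in>valleys u. of_bool (0 < j \<and> u ! (j - 1) = D))
      + (\<Sum>j\<in>valleys u. of_bool (Suc (Suc j) < length u \<and> u ! Suc (Suc j) = U))"
    by (simp only: sum.distrib)
  finally show ?thesis
    unfolding sum_valleys_D_before sum_valleys_U_after by simp
qed

lemma sum_sum_card_valleys_flip_valley: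
  "int (\<Sum>i\<in>valleys w. \<Sum>j\<in>valleys (flip_valley w i). card (valleys (flip_valley (flip_valley w i) j)))
     = int (card (valleys w)) * (int (card (valleys w)) - 1) * (int (card (valleys w)) - 2)
       + 3 * (int (card (valleys w)) - 1) * int (card (occ [D, D, U] w))
       + 3 * (int (card (valleys w)) - 1) * int (card (occ [D, U, U] w))
       + int (card (occ [D, D, D, U] w)) + int (card (occ [D, U, U, U] w))
       + 2 * int (card (occ [D, D, U, U] w)) + 2 * int (card (occ [D, U, D, U] w))"
proof -
  define v where "v = int (card (valleys w))"
  define a where "a = int (card (occ [D, D, U] w))"
  define b where "b = int (card (occ [D, U, U] w))"
  define L where "L i = (of_bool (0 < i \<and> w ! (i - 1) = D) :: int)" for i
  define R where "R i = (of_bool (Suc (Suc i) < length w \<and> w ! Suc (Suc i) = U) :: int)" for i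
  define LR where "LR i = (of_bool ((0 < i \<and> w ! (i - 1) = D) \<and>
                     (Suc (Suc i) < length w \<and> w ! Suc (Suc i) = U)) :: int)" for i
  define DDb where "DDb i = (of_bool (2 \<le> i \<and> w ! (i - 2) = D \<and> w ! (i - 1) = D) :: int)" for i
  define DUb where "DUb i = (of_bool (2 \<le> i \<and> w ! (i - 2) = D \<and> w ! (i - 1) = U) :: int)" for i
  define DUa where "DUa i = (of_bool (Suc (Suc (Suc i)) < length w \<and> w ! Suc (Suc i) = D
                     \<and> w ! Suc (Suc (Suc i)) = U) :: int)" for i
  define UUa where "UUa i = (of_bool (Suc (Suc (Suc i)) < length w \<and> w ! Suc (Suc i) = U
                     \<and> w ! Suc (Suc (Suc i)) = U) :: int)" for i
  have inner: "int (\<Sum>j\<in>valleys (flip_valley w i). card (valleys (flip_valley (flip_valley w i) j)))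
      = (v - 1) * (v - 2) + a + b + (2 * v - 3) * (L i + R i) + 2 * LR i + DDb i + DUb i + DUa i + UUa i"
    if i: "i \<in> valleys w" for i
  proof -
    have "int (\<Sum>j\<in>valleys (flip_valley w i). card (valleys (flip_valley (flip_valley w i) j)))
        = (v - 1 + L i + R i) * (v - 1 + L i + R i - 1) + (a - L i + DDb i + DUa i) + (b - R i + DUb i + UUa i)"
      unfolding sum_card_valleys_flip_valley card_valleys_flip_valley[OF i]
        card_occ_DDU_flip_valley[OF i] card_occ_DUU_flip_valley[OF i]
      by (simp add: v_def a_def b_def L_def R_def DDb_def DUb_def DUa_def UUa_def)
    also have "\<dots> = (v - 1) * (v - 2) + a + b + (2 * v - 3) * (L i + R i) + 2 * LR i
                      + DDb i + DUb i + DUa i + UUa i"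
      \<comment> \<open>\<open>L\<close> and \<open>R\<close> are 0/1-valued, with product \<open>LR\<close>.\<close>
      unfolding L_def R_def LR_def by (cases "0 < i \<and> w ! (i - 1) = D";
          cases "Suc (Suc i) < length w \<and> w ! Suc (Suc i) = U") (simp_all add: algebra_simps)
    finally show ?thesis .
  qed
  have sums: "(\<Sum>i\<in>valleys w. L i) = a" "(\<Sum>i\<in>valleys w. R i) = b"
    "(\<Sum>i\<in>valleys w. LR i) = int (card (occ [D, D, U, U] w))"
    "(\<Sum>i\<in>valleys w. DDb i) = int (card (occ [D, D, D, U] w))"
    "(\<Sum>i\<in>valleys w. DUb i) = int (card (occ [D, U, D, U] w))"
    "(\<Sum>i\<in>valleys w. DUa i) = int (card (occ [D, U, D, U] w))"
    "(\<Sum>i\<in>valleys w. UUa i) = int (card (occ [D, U, U, U] w))"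
    unfolding a_def b_def L_def R_def LR_def DDb_def DUb_def DUa_def UUa_def
    by (rule sum_valleys_D_before sum_valleys_U_after sum_valleys_D_before_U_after
        sum_valleys_DD_before sum_valleys_DU_before sum_valleys_DU_after sum_valleys_UU_after)+
  have "int (\<Sum>i\<in>valleys w. \<Sum>j\<in>valleys (flip_valley w i). card (valleys (flip_valley (flip_valley w i) j)))
      = (\<Sum>i\<in>valleys w. (v - 1) * (v - 2) + a + b + (2 * v - 3) * (L i + R i) + 2 * LR i
                          + DDb i + DUb i + DUa i + UUa i)"
    unfolding of_nat_sum[of _ "valleys w"] by (rule sum.cong[OF refl inner])
  also have "\<dots> = v * ((v - 1) * (v - 2) + a + b) + (2 * v - 3) * (a + b)
      + 2 * int (card (occ [D, D, U, U] w)) + int (card (occ [D, D, D, U] w))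
      + 2 * int (card (occ [D, U, D, U] w)) + int (card (occ [D, U, U, U] w))"
    by (simp add: sum.distrib sum_distrib_left[symmetric] sums v_def[symmetric])
  finally show ?thesis unfolding v_def a_def b_def by (simp add: algebra_simps)
qed

lemma int_choose_two: "2 * int (n choose 2) = int n * (int n - 1)"
proof (induction n)
  case (Suc n)
  have "Suc n choose 2 = n + (n choose 2)"
    using binomial_Suc_Suc[of n 1] by (simp add: numeral_2_eq_2)
  then show ?case using Suc by (simp add: algebra_simps)
qed simp

lemma int_choose_three: "6 * int (n choose 3) = int n * (int n - 1) * (int n - 2)"
proof (induction n)
  case (Suc n)
  have "Suc n choose 3 = (n choose 2) + (n choose 3)"
    using binomial_Suc_Suc[of n 2] by (simp add: numeral_3_eq_3 numeral_2_eq_2)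
  then show ?case using Suc int_choose_two[of n] by (simp add: algebra_simps)
qed simp

lemma sum_three_valley_flips_eq_num_occ:
  "(\<Sum>i\<in>valleys \<gamma>. \<Sum>j\<in>valleys (flip_valley \<gamma> i). card (valleys (flip_valley (flip_valley \<gamma> i) j)))
   = 6 * num_occ [[D, U], [D, U], [D, U]] \<gamma>
     + 3 * num_occ [[D, U], [D, D, U]] \<gamma>
     + 3 * num_occ [[D, U], [D, U, U]] \<gamma>
     + num_occ [[D, D, D, U]] \<gamma>
     + num_occ [[D, U, U, U]] \<gamma>
     + 2 * num_occ [[D, D, U, U]] \<gamma>
     + 2 * num_occ [[D, U, D, U]] \<gamma>"
proof -
  have "6 * int (num_occ [[D, U], [D, U], [D, U]] \<gamma>)
      = int (card (valleys \<gamma>)) * (int (card (valleys \<gamma>)) - 1) * (int (card (valleys \<gamma>)) - 2)"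
    by (simp only: num_occ_three_valleys int_choose_three)
  then show ?thesis
    by (simp only: of_nat_eq_iff[where 'a = int, symmetric] sum_sum_card_valleys_flip_valley)
      (simp add: num_occ_valley_DDU num_occ_valley_DUU num_occ_single algebra_simps)
qed

theorem mainTheorem6:
  shows "Abs_fps (\<lambda>n. of_nat (sc3 n) :: int) =
    Abs_fps (\<lambda>n. of_nat (\<Sum>\<gamma>\<in>Dyck n.
        6 * num_occ [[D,U],[D,U],[D,U]] \<gamma>
      + 3 * num_occ [[D,U],[D,D,U]] \<gamma>
      + 3 * num_occ [[D,U],[D,U,U]] \<gamma>
      + num_occ [[D,D,D,U]] \<gamma>
      + num_occ [[D,U,U,U]] \<gamma>
      + 2 * num_occ [[D,D,U,U]] \<gamma>
      + 2 * num_occ [[D,U,D,U]] \<gamma>))"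
  by (simp add: sc3_eq_sum_valleys sum_three_valley_flips_eq_num_occ)

end
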